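(* Let $G=\bigl((f_j)_{j=1}^n;(\mu^{R})_{\emptyset\ne R\subseteq[n]}\bigr)$ be an $n$-resource selection game. (a) Every Nash equilibrium of $G$ is a strong Nash equilibrium. (b) If there exists a Nash equilibrium $s$ of $G$ such that for every $j\in[n]$, $h^s_j$ is not a plateau height of $f_j$, then every Nash equilibrium of $G$ is a super-strong Nash equilibrium.
   Context: Write $[n]=\{1,\ldots,n\}$ and $\mathbb{R}_{\ge}=[0,\infty)$. An $n$-resource selection game is a pair $G=\bigl((f_j)_{j=1}^n;(\mu^{R})_{\emptyset\ne R\subseteq[n]}\bigr)$ where each $f_j:\mathbb{R}_{\ge}\to\mathbb{R}$ is nondecreasing and $\mu^R\in\mathbb{R}_{\ge}$ for every nonempty $R\subseteq[n]$. A consumption profile is a map $s$ assigning to each nonempty $R\subseteq[n]$ a vector $s(R)\in\mathbb{R}_{\ge}^{[n]}$ with $s_j(R)=0$ for $j\notin R$ and $\sum_{j}s_j(R)=\mu^R$. The load of resource $j$ is $\mu^s_j=\sum_{R}s_j(R)$ and its cost is $h^s_j=f_j(\mu^s_j)$. $s$ is a Nash equilibrium if for every nonempty $R$, every $k$ with $s_k(R)>0$ and every $j\in R$, $h^s_k\le h^s_j$. For a Nash equilibrium $s$ and $R$ with $\mu^R>0$, let $h^R=h^s_k$ for any $k$ with $s_k(R)>0$. A Nash equilibrium $s$ is strong if there is no consumption profile $s'\ne s$ such that for every $R$ and every $k$ with $s'_k(R)>s_k(R)$, $h^{s'}_k<h^R$. It is super-strong if there is no consumption profile $s'$ such that for every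 $R$ and every $k$ with $s'_k(R)>s_k(R)$, $h^{s'}_k\le h^R$, and additionally there is at least one pair $(R,k)$ with $s'_k(R)>0$ and $h^{s'}_k<h^R$. A real $h$ is a plateau height of a nondecreasing $f$ if there are $x\ne y$ with $f(x)=f(y)=h$. *)

theory Defs
  imports Main "HOL.Real"
begin

definition coalitions :: "nat \<Rightarrow> nat set set" where
  "coalitions n = {R. R \<subseteq> {1..n} \<and> R \<noteq> {}}"

definition rs_game :: "nat \<Rightarrow> (nat \<Rightarrow> real \<Rightarrow> real) \<Rightarrow> (nat set \<Rightarrow> real) \<Rightarrow> bool" where
  "rs_game n f mu \<longleftrightarrow>
     (\<forall>j\<in>{1..n}. mono_on {0..} (f j)) \<and> (\<forall>R\<in>coalitions n. mu R \<ge> 0)"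

text \<open>Consumption profile; s R j is the consumption of resource j by R.
  Values outside the index range (R not a nonempty subset of [n], or j not in R) are fixed to 0.\<close>
definition profile :: "nat \<Rightarrow> (nat set \<Rightarrow> real) \<Rightarrow> (nat set \<Rightarrow> nat \<Rightarrow> real) \<Rightarrow> bool" where
  "profile n mu s \<longleftrightarrow>
     (\<forall>R j. (R \<notin> coalitions n \<or> j \<notin> R) \<longrightarrow> s R j = 0) \<and>
     (\<forall>R\<in>coalitions n. (\<forall>j. s R j \<ge> 0) \<and> (\<Sum>j\<in>{1..n}. s R j) = mu R)"

definition load :: "nat \<Rightarrow> (nat set \<Rightarrow> nat \<Rightarrow> real) \<Rightarrow> nat \<Rightarrow> real" where
  "load n s j = (\<Sum>R\<in>coalitions n. s R j)"

definition cost :: "nat \<Rightarrow> (nat \<Rightarrow> real \<Rightarrow> real) \<Rightarrow> (nat set \<Rightarrow> nat \<Rightarrow> real) \<Rightarrow> nat \<Rightarrow> real" where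
  "cost n f s j = f j (load n s j)"

definition nash :: "nat \<Rightarrow> (nat \<Rightarrow> real \<Rightarrow> real) \<Rightarrow> (nat set \<Rightarrow> real) \<Rightarrow> (nat set \<Rightarrow> nat \<Rightarrow> real) \<Rightarrow> bool" where
  "nash n f mu s \<longleftrightarrow> profile n mu s \<and>
     (\<forall>R\<in>coalitions n. \<forall>k. s R k > 0 \<longrightarrow> (\<forall>j\<in>R. cost n f s k \<le> cost n f s j))"

text \<open>h^R: the cost of any resource used by R (well defined at a Nash equilibrium when mu R > 0).\<close>
definition height :: "nat \<Rightarrow> (nat \<Rightarrow> real \<Rightarrow> real) \<Rightarrow> (nat set \<Rightarrow> nat \<Rightarrow> real) \<Rightarrow> nat set \<Rightarrow> real" where
  "height n f s R = cost n f s (SOME k. s R k > 0)"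

definition strong_nash :: "nat \<Rightarrow> (nat \<Rightarrow> real \<Rightarrow> real) \<Rightarrow> (nat set \<Rightarrow> real) \<Rightarrow> (nat set \<Rightarrow> nat \<Rightarrow> real) \<Rightarrow> bool" where
  "strong_nash n f mu s \<longleftrightarrow> nash n f mu s \<and>
     \<not> (\<exists>s'. profile n mu s' \<and> s' \<noteq> s \<and>
           (\<forall>R\<in>coalitions n. \<forall>k. s' R k > s R k \<longrightarrow> cost n f s' k < height n f s R))"

definition super_strong_nash :: "nat \<Rightarrow> (nat \<Rightarrow> real \<Rightarrow> real) \<Rightarrow> (nat set \<Rightarrow> real) \<Rightarrow> (nat set \<Rightarrow> nat \<Rightarrow> real) \<Rightarrow> bool" where
  "super_strong_nash n f mu s \<longleftrightarrow> nash n f mu s \<and>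
     \<not> (\<exists>s'. profile n mu s' \<and>
           (\<forall>R\<in>coalitions n. \<forall>k. s' R k > s R k \<longrightarrow> cost n f s' k \<le> height n f s R) \<and>
           (\<exists>R\<in>coalitions n. \<exists>k. s' R k > 0 \<and> cost n f s' k < height n f s R))"

definition plateau_height :: "(real \<Rightarrow> real) \<Rightarrow> real \<Rightarrow> bool" where
  "plateau_height g h \<longleftrightarrow> (\<exists>x y. x \<ge> 0 \<and> y \<ge> 0 \<and> x \<noteq> y \<and> g x = h \<and> g y = h)"

end

theory Submission
  imports Defs
begin

text \<open>Equilibrium costs are unique: for two Nash equilibria \<open>s\<close>, \<open>t\<close> the variational inequality
  \<open>\<Sum>\<^sub>j h\<^sup>s\<^sub>j \<mu>\<^sup>s\<^sub>j \<le> \<Sum>\<^sub>j h\<^sup>s\<^sub>j \<mu>\<^sup>t\<^sub>j\<close> and its mirror image add up to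
  \<open>\<Sum>\<^sub>j (h\<^sup>s\<^sub>j - h\<^sup>t\<^sub>j)(\<mu>\<^sup>s\<^sub>j - \<mu>\<^sup>t\<^sub>j) \<le> 0\<close>, while monotonicity makes every term nonnegative.
  A deviating coalition only moves consumption onto resources whose new cost is at most its
  height, which is at most their old cost. Under strict improvement, or in the absence of plateaus,
  this forces the load of every such resource not to increase; as the total load is conserved,
  all loads, hence all costs, stay the same, contradicting the improvement.\<close>

lemma profile_zero_outside:
  "profile n mu s \<Longrightarrow> R \<notin> coalitions n \<or> j \<notin> R \<Longrightarrow> s R j = 0"
  unfolding profile_def by blast

lemma profile_nonneg: "profile n mu s \<Longrightarrow> s R j \<ge> 0"
  unfolding profile_def by (cases "R \<in> coalitions n") auto

lemma profile_sum_eq: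
  "profile n mu s \<Longrightarrow> R \<in> coalitions n \<Longrightarrow> (\<Sum>j\<in>{1..n}. s R j) = mu R"
  unfolding profile_def by blast

lemma profile_pos_imp_mem:
  assumes "profile n mu s" "s R k > 0"
  shows "R \<in> coalitions n" "k \<in> R" "k \<in> {1..n}"
proof -
  show R: "R \<in> coalitions n" and k: "k \<in> R"
    using profile_zero_outside[OF assms(1), of R k] assms(2) by auto
  show "k \<in> {1..n}" using R k unfolding coalitions_def by auto
qed

lemma profile_eq_0_if_mu_eq_0:
  assumes "profile n mu s" "R \<in> coalitions n" "mu R = 0"
  shows "s R j = 0"
proof (cases "j \<in> {1..n}")
  case True
  have "(\<Sum>i\<in>{1..n}. s R i) = 0" using profile_sum_eq[OF assms(1,2)] assms(3) by simp
  then have "\<forall>i\<in>{1..n}. s R i = 0"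
    by (simp add: sum_nonneg_eq_0_iff profile_nonneg[OF assms(1)])
  with True show ?thesis by blast
next
  case False
  then show ?thesis
    using assms(2) profile_zero_outside[OF assms(1)] unfolding coalitions_def by blast
qed

lemma profile_pos_imp_coalition_active:
  assumes "profile n mu s" "profile n mu s'" "s' R k > 0"
  obtains k0 where "s R k0 > 0"
proof -
  have R: "R \<in> coalitions n" using profile_pos_imp_mem(1)[OF assms(2,3)] .
  have "mu R \<noteq> 0" using profile_eq_0_if_mu_eq_0[OF assms(2) R] assms(3) by force
  then obtain j where "s R j \<noteq> 0" using profile_sum_eq[OF assms(1) R] by force
  then show thesis using that profile_nonneg[OF assms(1), of R j] by (simp add: less_le)
qed

lemma load_nonneg: "profile n mu s \<Longrightarrow> load n s j \<ge> 0"
  unfolding load_def by (rule sum_nonneg) (rule profile_nonneg)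

lemma sum_load_eq:
  assumes "profile n mu s"
  shows "(\<Sum>j\<in>{1..n}. load n s j) = (\<Sum>R\<in>coalitions n. mu R)"
proof -
  have "(\<Sum>j\<in>{1..n}. load n s j) = (\<Sum>R\<in>coalitions n. \<Sum>j\<in>{1..n}. s R j)"
    unfolding load_def by (rule sum.swap)
  also have "\<dots> = (\<Sum>R\<in>coalitions n. mu R)"
    by (rule sum.cong[OF refl]) (rule profile_sum_eq[OF assms])
  finally show ?thesis .
qed

lemma rs_game_mono_on: "rs_game n f mu \<Longrightarrow> j \<in> {1..n} \<Longrightarrow> mono_on {0..} (f j)"
  unfolding rs_game_def by blast

lemma nash_profile: "nash n f mu s \<Longrightarrow> profile n mu s"
  unfolding nash_def by blast

lemma nash_cost_eq_height:
  assumes ns: "nash n f mu s" and k: "s R k > 0"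
  shows "cost n f s k = height n f s R"
proof -
  define k' where "k' = (SOME k. s R k > 0)"
  have k': "s R k' > 0" unfolding k'_def using k by (rule someI)
  note mem = profile_pos_imp_mem[OF nash_profile[OF ns]]
  have "cost n f s k \<le> cost n f s k'" "cost n f s k' \<le> cost n f s k"
    using ns mem[OF k] mem[OF k'] k k' unfolding nash_def by blast+
  then show ?thesis unfolding height_def k'_def[symmetric] by simp
qed

lemma nash_height_le_cost:
  assumes ns: "nash n f mu s" and "s R k0 > 0" "j \<in> R"
  shows "height n f s R \<le> cost n f s j"
  using assms nash_cost_eq_height[OF ns] profile_pos_imp_mem(1)[OF nash_profile[OF ns]]
  unfolding nash_def by metis

lemma nash_height_le_cost_if_used:
  assumes ns: "nash n f mu s" and p': "profile n mu s'" and pos: "s' R k > 0"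
  shows "height n f s R \<le> cost n f s k"
proof -
  obtain k0 where "s R k0 > 0"
    using profile_pos_imp_coalition_active[OF nash_profile[OF ns] p' pos] .
  then show ?thesis using nash_height_le_cost[OF ns] profile_pos_imp_mem(2)[OF p' pos] by blast
qed

lemma nash_variational_inequality_coalition:
  assumes ns: "nash n f mu s" and pt: "profile n mu t" and R: "R \<in> coalitions n"
  shows "(\<Sum>j\<in>{1..n}. cost n f s j * s R j) \<le> (\<Sum>j\<in>{1..n}. cost n f s j * t R j)"
proof (cases "\<exists>k. s R k > 0")
  case True
  then obtain k0 where k0: "s R k0 > 0" by blast
  have ps: "profile n mu s" using nash_profile[OF ns] .
  let ?h = "height n f s R"
  have "(\<Sum>j\<in>{1..n}. cost n f s j * s R j) = (\<Sum>j\<in>{1..n}. ?h * s R j)"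
    using nash_cost_eq_height[OF ns] profile_nonneg[OF ps, of R]
    by (intro sum.cong) (auto simp: less_eq_real_def)
  also have "\<dots> = (\<Sum>j\<in>{1..n}. ?h * t R j)"
    using profile_sum_eq[OF ps R] profile_sum_eq[OF pt R] by (simp add: sum_distrib_left[symmetric])
  also have "\<dots> \<le> (\<Sum>j\<in>{1..n}. cost n f s j * t R j)"
  proof (rule sum_mono)
    fix j
    show "?h * t R j \<le> cost n f s j * t R j"
    proof (cases "t R j > 0")
      case True
      then show ?thesis
        using nash_height_le_cost[OF ns k0 profile_pos_imp_mem(2)[OF pt True]]
        by (simp add: mult_right_mono)
    qed (use profile_nonneg[OF pt, of R j] in simp)
  qed
  finally show ?thesis .
next
  case False
  then have s0: "s R j = 0" for j
    using profile_nonneg[OF nash_profile[OF ns], of R j] by (metis not_less order_antisym)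
  then have "mu R = 0" using profile_sum_eq[OF nash_profile[OF ns] R] by simp
  then show ?thesis using s0 profile_eq_0_if_mu_eq_0[OF pt R] by simp
qed

lemma nash_variational_inequality:
  assumes "nash n f mu s" "profile n mu t"
  shows "(\<Sum>j\<in>{1..n}. cost n f s j * load n s j) \<le> (\<Sum>j\<in>{1..n}. cost n f s j * load n t j)"
proof -
  have swap: "(\<Sum>j\<in>{1..n}. cost n f s j * load n u j) =
      (\<Sum>R\<in>coalitions n. \<Sum>j\<in>{1..n}. cost n f s j * u R j)" for u
    unfolding load_def by (subst sum.swap) (simp add: sum_distrib_left)
  show ?thesis
    unfolding swap by (rule sum_mono) (rule nash_variational_inequality_coalition[OF assms])
qed

lemma nash_cost_unique:
  assumes g: "rs_game n f mu" and ns: "nash n f mu s" and nt: "nash n f mu t"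
    and j: "j \<in> {1..n}"
  shows "cost n f s j = cost n f t j"
proof -
  have ps: "profile n mu s" and pt: "profile n mu t" using ns nt by (simp_all add: nash_profile)
  define d where "d i = (cost n f s i - cost n f t i) * (load n s i - load n t i)" for i
  have d_nonneg: "d i \<ge> 0" if "i \<in> {1..n}" for i
  proof -
    note mono = mono_onD[OF rs_game_mono_on[OF g that]]
    have "load n t i \<le> load n s i \<Longrightarrow> cost n f t i \<le> cost n f s i"
      "load n s i \<le> load n t i \<Longrightarrow> cost n f s i \<le> cost n f t i"
      unfolding cost_def using mono load_nonneg[OF ps] load_nonneg[OF pt] by auto
    then show ?thesis unfolding d_def
      by (cases "load n t i \<le> load n s i") (auto intro: mult_nonpos_nonpos)
  qed
  have "(\<Sum>i\<in>{1..n}. d i) =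
      ((\<Sum>i\<in>{1..n}. cost n f s i * load n s i) - (\<Sum>i\<in>{1..n}. cost n f s i * load n t i))
      + ((\<Sum>i\<in>{1..n}. cost n f t i * load n t i) - (\<Sum>i\<in>{1..n}. cost n f t i * load n s i))"
    unfolding d_def by (simp add: sum_subtractf sum.distrib algebra_simps)
  also have "\<dots> \<le> 0"
    using nash_variational_inequality[OF ns pt] nash_variational_inequality[OF nt ps] by simp
  finally have "(\<Sum>i\<in>{1..n}. d i) = 0" using sum_nonneg[of "{1..n}" d] d_nonneg by force
  then have "d j = 0" using j by (subst (asm) sum_nonneg_eq_0_iff) (auto intro: d_nonneg)
  then show ?thesis unfolding d_def cost_def by auto
qed

lemma load_eq_if_no_load_increase:
  assumes p: "profile n mu s" and p': "profile n mu s'"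
    and no_increase: "\<forall>R\<in>coalitions n. \<forall>k. s R k < s' R k \<longrightarrow> load n s' k \<le> load n s k"
    and j: "j \<in> {1..n}"
  shows "load n s' j = load n s j"
proof -
  have le: "load n s' i \<le> load n s i" for i
  proof (cases "\<exists>R\<in>coalitions n. s R i < s' R i")
    case False
    then show ?thesis unfolding load_def by (intro sum_mono) (auto simp: not_less)
  qed (use no_increase in blast)
  have "(\<Sum>i\<in>{1..n}. load n s i - load n s' i) = 0"
    using sum_load_eq[OF p] sum_load_eq[OF p'] by (simp add: sum_subtractf)
  then have "\<forall>i\<in>{1..n}. load n s i - load n s' i = 0"
    by (subst (asm) sum_nonneg_eq_0_iff) (auto simp: le)
  with j show ?thesis by simp
qed

lemma profile_ne_imp_increase:
  assumes p: "profile n mu s" and p': "profile n mu s'" and ne: "s' \<noteq> s"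
  shows "\<exists>R\<in>coalitions n. \<exists>k. s R k < s' R k"
proof (rule ccontr)
  assume "\<not> ?thesis"
  then have le: "s' R k \<le> s R k" if "R \<in> coalitions n" for R k
    using that by (meson not_less)
  obtain R j where d: "s' R j \<noteq> s R j" using ne by (meson ext)
  have R: "R \<in> coalitions n" and "j \<in> R"
    using d profile_zero_outside[OF p] profile_zero_outside[OF p'] by metis+
  then have "j \<in> {1..n}" unfolding coalitions_def by auto
  moreover have "s' R j < s R j" using le[OF R] d by (simp add: less_le)
  ultimately have "(\<Sum>i\<in>{1..n}. s' R i) < (\<Sum>i\<in>{1..n}. s R i)"
    using le[OF R] by (intro sum_strict_mono_ex1) auto
  then show False using profile_sum_eq[OF p R] profile_sum_eq[OF p' R] by simp
qed

lemma le_if_mono_on_not_plateau: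
  fixes g :: "real \<Rightarrow> real"
  assumes "mono_on {0..} g" "\<not> plateau_height g (g x)" "0 \<le> x" "0 \<le> y" "g y \<le> g x"
  shows "y \<le> x"
proof (rule ccontr)
  assume "\<not> y \<le> x"
  then have "g x = g y" using mono_onD[OF assms(1), of x y] assms(3-5) by force
  then have "plateau_height g (g x)"
    unfolding plateau_height_def using \<open>\<not> y \<le> x\<close> assms(3,4)
    by (intro exI[of _ x] exI[of _ y]) auto
  with assms(2) show False ..
qed

lemma nash_imp_strong_nash:
  assumes g: "rs_game n f mu" and ns: "nash n f mu s"
  shows "strong_nash n f mu s"
  unfolding strong_nash_def
proof (intro conjI ns notI, elim exE conjE)
  fix s' assume p': "profile n mu s'" and ne: "s' \<noteq> s"
    and improve: "\<forall>R\<in>coalitions n. \<forall>k. s R k < s' R k \<longrightarrow> cost n f s' k < height n f s R"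
  have ps: "profile n mu s" using nash_profile[OF ns] .
  have increase_pos: "s' R k > 0" if "s R k < s' R k" for R k
    using that profile_nonneg[OF ps, of R k] by simp
  have cost_less: "cost n f s' k < cost n f s k"
    if R: "R \<in> coalitions n" and k: "s R k < s' R k" for R k
  proof -
    have "cost n f s' k < height n f s R" using improve R k by blast
    also have "\<dots> \<le> cost n f s k" by (rule nash_height_le_cost_if_used[OF ns p' increase_pos[OF k]])
    finally show ?thesis .
  qed
  have "\<forall>R\<in>coalitions n. \<forall>k. s R k < s' R k \<longrightarrow> load n s' k \<le> load n s k"
  proof (intro ballI allI impI)
    fix R k assume R: "R \<in> coalitions n" and k: "s R k < s' R k"
    have "k \<in> {1..n}" using profile_pos_imp_mem(3)[OF p' increase_pos[OF k]] .
    then show "load n s' k \<le> load n s k"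
      using cost_less[OF R k] load_nonneg[OF ps, of k] load_nonneg[OF p', of k]
      by (elim mono_on_strict_invE[OF rs_game_mono_on[OF g]]) (auto simp: cost_def)
  qed
  then have load_eq: "load n s' k = load n s k" if "k \<in> {1..n}" for k
    using load_eq_if_no_load_increase[OF ps p'] that by blast
  obtain R k where R: "R \<in> coalitions n" and k: "s R k < s' R k"
    using profile_ne_imp_increase[OF ps p' ne] by blast
  show False
    using cost_less[OF R k] load_eq[OF profile_pos_imp_mem(3)[OF p' increase_pos[OF k]]]
    unfolding cost_def by simp
qed

lemma nash_imp_super_strong_nash:
  assumes g: "rs_game n f mu" and ns: "nash n f mu s"
    and no_plateau: "\<forall>j\<in>{1..n}. \<not> plateau_height (f j) (cost n f s j)"
  shows "super_strong_nash n f mu s"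
  unfolding super_strong_nash_def
proof (intro conjI ns notI, elim exE conjE bexE)
  fix s' R k assume p': "profile n mu s'"
    and improve: "\<forall>R\<in>coalitions n. \<forall>k. s R k < s' R k \<longrightarrow> cost n f s' k \<le> height n f s R"
    and R: "R \<in> coalitions n" and pos: "s' R k > 0" and less: "cost n f s' k < height n f s R"
  have ps: "profile n mu s" using nash_profile[OF ns] .
  have "\<forall>R\<in>coalitions n. \<forall>k. s R k < s' R k \<longrightarrow> load n s' k \<le> load n s k"
  proof (intro ballI allI impI)
    fix R k assume R: "R \<in> coalitions n" and k: "s R k < s' R k"
    have pos: "s' R k > 0" using k profile_nonneg[OF ps, of R k] by simp
    have kn: "k \<in> {1..n}" using profile_pos_imp_mem(3)[OF p' pos] .
    have "cost n f s' k \<le> height n f s R" using improve R k by blast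
    also have "\<dots> \<le> cost n f s k" by (rule nash_height_le_cost_if_used[OF ns p' pos])
    finally have "f k (load n s' k) \<le> f k (load n s k)" unfolding cost_def .
    moreover have "\<not> plateau_height (f k) (f k (load n s k))"
      using no_plateau kn unfolding cost_def by blast
    ultimately show "load n s' k \<le> load n s k"
      using le_if_mono_on_not_plateau[OF rs_game_mono_on[OF g kn]] load_nonneg[OF ps, of k]
        load_nonneg[OF p', of k] by blast
  qed
  then have "load n s' k = load n s k"
    using load_eq_if_no_load_increase[OF ps p'] profile_pos_imp_mem(3)[OF p' pos] by blast
  then show False
    using less nash_height_le_cost_if_used[OF ns p' pos] unfolding cost_def by simp
qed

theorem mainTheorem4:
  assumes "rs_game n f mu"
  shows "(\<forall>s. nash n f mu s \<longrightarrow> strong_nash n f mu s) \<and>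
         ((\<exists>s. nash n f mu s \<and> (\<forall>j\<in>{1..n}. \<not> plateau_height (f j) (cost n f s j)))
            \<longrightarrow> (\<forall>s. nash n f mu s \<longrightarrow> super_strong_nash n f mu s))"
proof (intro conjI allI impI)
  fix s assume "nash n f mu s"
  then show "strong_nash n f mu s" using nash_imp_strong_nash[OF assms] by blast
next
  fix s assume "\<exists>s. nash n f mu s \<and> (\<forall>j\<in>{1..n}. \<not> plateau_height (f j) (cost n f s j))"
  then obtain s0 where ns0: "nash n f mu s0"
    and no_plateau: "\<forall>j\<in>{1..n}. \<not> plateau_height (f j) (cost n f s0 j)" by blast
  assume ns: "nash n f mu s"
  have "\<forall>j\<in>{1..n}. \<not> plateau_height (f j) (cost n f s j)"
    using no_plateau nash_cost_unique[OF assms ns ns0] by simp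
  then show "super_strong_nash n f mu s" using nash_imp_super_strong_nash[OF assms ns] by blast
qed

end
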